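(* Fix $g>0$, $p_0<p_1<0$, $\ell>0$ and $[\![\rho]\!]<0$. If $\Gamma_{\mathrm{rel}}>0$ satisfies $|p_1|=\Gamma_{\mathrm{rel}}\ell$, then there exists a one-parameter family $\{(H(\cdot;\lambda),Q(\lambda)):\lambda>0\}$ of solutions to the laminar flow problem with $H_p>0$, each of which has relative circulation $\Gamma_{\mathrm{rel}}$ on the lid (i.e. $H_p(0;\lambda)^{-1}=\Gamma_{\mathrm{rel}}$). Explicitly, $$H(p;\lambda)=\begin{cases}\dfrac{p}{\Gamma_{\mathrm{rel}}}+\ell+\dfrac{p_1-p_0}{\lambda}, & p_1<p<0,\\[2mm] \dfrac{p-p_0}{\lambda}, & p_0<p<p_1,\end{cases}\qquad Q(\lambda)=\frac{2g[\![\rho]\!](p_1-p_0)}{\lambda}+\Gamma_{\mathrm{rel}}^2-\lambda^2 .$$ In particular the depth of the fluid at parameter $\lambda$ is $d(\lambda)=H(p_1;\lambda)=\dfrac{p_1-p_0}{\lambda}$ and the width of the channel is $W(\lambda)=\ell+d(\lambda)$.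
   Context: Laminar flow problem: find $Q\in\mathbb R$ and $H\in C([p_0,0])$, of class $C^2$ on $[p_0,p_1]$ and on $[p_1,0]$ (one-sided derivatives at $p_1$), such that $H_{pp}=0$ on $(p_0,p_1)\cup(p_1,0)$; $[\![H_p^{-2}]\!]+2g[\![\rho]\!]H(p_1)-Q=0$; $H(0)=\ell+d(H)$ with $d(H)=H(p_1)$; $H(p_0)=0$. Here $[\![f]\!]=f(p_1^+)-f(p_1^-)$ (air value minus water value), $[\![\rho]\!]=\rho_{\mathrm{air}}-\rho_{\mathrm{water}}$, and $g$ is the gravitational constant. *)

theory Defs
  imports "HOL-Analysis.Analysis"
begin

text \<open>Water layer: pressure interval [p0,p1]; air layer: [p1,0].\<close>

definition C2_pieces ::
  "real \<Rightarrow> real \<Rightarrow> (real \<Rightarrow> real) \<Rightarrow> (real \<Rightarrow> real) \<Rightarrow> (real \<Rightarrow> real)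
     \<Rightarrow> (real \<Rightarrow> real) \<Rightarrow> (real \<Rightarrow> real) \<Rightarrow> bool" where
  "C2_pieces p0 p1 H Hw' Hw'' Ha' Ha'' \<longleftrightarrow>
     (\<forall>p\<in>{p0..p1}. (H has_real_derivative Hw' p) (at p within {p0..p1}) \<and>
                    (Hw' has_real_derivative Hw'' p) (at p within {p0..p1})) \<and>
     continuous_on {p0..p1} Hw'' \<and>
     (\<forall>p\<in>{p1..0}. (H has_real_derivative Ha' p) (at p within {p1..0}) \<and>
                    (Ha' has_real_derivative Ha'' p) (at p within {p1..0})) \<and>
     continuous_on {p1..0} Ha''"

text \<open>The laminar flow problem; rho_jump = [[rho]] = rho_air - rho_water.
  The jump [[H_p^{-2}]] is (air value) - (water value) at p1.\<close>

definition laminar_solution ::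
  "real \<Rightarrow> real \<Rightarrow> real \<Rightarrow> real \<Rightarrow> real \<Rightarrow> (real \<Rightarrow> real) \<Rightarrow> real \<Rightarrow> bool" where
  "laminar_solution g rho_jump p0 p1 l H Q \<longleftrightarrow>
     continuous_on {p0..0} H \<and>
     (\<exists>Hw' Hw'' Ha' Ha''. C2_pieces p0 p1 H Hw' Hw'' Ha' Ha'' \<and>
        (\<forall>p\<in>{p0<..<p1}. Hw'' p = 0) \<and>
        (\<forall>p\<in>{p1<..<0}. Ha'' p = 0) \<and>
        1 / (Ha' p1)^2 - 1 / (Hw' p1)^2 + 2 * g * rho_jump * H p1 - Q = 0 \<and>
        H 0 = l + H p1 \<and>
        H p0 = 0)"

end

theory Submission
  imports Defs
begin

text \<open>Both layers carry an affine stream function, so \<open>H\<^sub>p\<^sub>p = 0\<close> holds trivially, with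
  slopes \<open>1/\<lambda>\<close> in the water and \<open>1/\<Gamma>\<close> in the air. The hypothesis \<open>|p\<^sub>1| = \<Gamma> \<ell>\<close> is
  exactly what makes the two affine pieces agree at \<open>p\<^sub>1\<close>; the jump condition then
  merely fixes the Bernoulli constant \<open>Q\<close>.\<close>

lemma affine_has_real_derivative_within:
  assumes "\<And>q. q \<in> S \<Longrightarrow> H q = a * q + b" and "p \<in> S"
  shows "(H has_real_derivative a) (at p within S)"
proof -
  have "((\<lambda>q. a * q + b) has_real_derivative a) (at p within S)"
    by (auto intro!: derivative_eq_intros)
  then show ?thesis
    by (rule has_field_derivative_transform_within[where d=1]) (use assms in auto)
qed

lemma C2_pieces_affine:
  assumes "\<And>p. p \<in> {p0..p1} \<Longrightarrow> H p = a * p + b"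
    and "\<And>p. p \<in> {p1..0} \<Longrightarrow> H p = c * p + d"
  shows "C2_pieces p0 p1 H (\<lambda>_. a) (\<lambda>_. 0) (\<lambda>_. c) (\<lambda>_. 0)"
  unfolding C2_pieces_def
  using affine_has_real_derivative_within[of "{p0..p1}", OF assms(1)]
    affine_has_real_derivative_within[of "{p1..0}", OF assms(2)]
  by auto

lemma continuous_on_affine_pieces:
  fixes p0 p1 :: real
  assumes "p0 \<le> p1" "p1 \<le> 0"
    and "\<And>p. p \<in> {p0..p1} \<Longrightarrow> H p = a * p + b"
    and "\<And>p. p \<in> {p1..0} \<Longrightarrow> H p = c * p + d"
  shows "continuous_on {p0..0} H"
proof -
  have "continuous_on {p0..p1} H"
    by (rule continuous_on_eq[of _ "\<lambda>p. a * p + b"]) (auto intro!: continuous_intros simp: assms(3))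
  moreover have "continuous_on {p1..0} H"
    by (rule continuous_on_eq[of _ "\<lambda>p. c * p + d"]) (auto intro!: continuous_intros simp: assms(4))
  ultimately have "continuous_on ({p0..p1} \<union> {p1..0}) H"
    by (intro continuous_on_closed_Un closed_atLeastAtMost)
  moreover have "{p0..p1} \<union> {p1..0} = {p0..0}"
    using assms(1,2) by auto
  ultimately show ?thesis
    by simp
qed

theorem lemma3p2:
  fixes g p0 p1 l rho_jump Gamma :: real
  assumes "g > 0" and "p0 < p1" and "p1 < 0" and "l > 0" and "rho_jump < 0"
    and "Gamma > 0" and "\<bar>p1\<bar> = Gamma * l"
  shows "\<forall>lam > 0.
    (let H = (\<lambda>p. if p1 < p then p / Gamma + l + (p1 - p0) / lam else (p - p0) / lam);
         Q = 2 * g * rho_jump * (p1 - p0) / lam + Gamma^2 - lam^2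
     in laminar_solution g rho_jump p0 p1 l H Q \<and>
        (\<exists>Hw' Hw'' Ha' Ha''. C2_pieces p0 p1 H Hw' Hw'' Ha' Ha'' \<and>
           (\<forall>p\<in>{p0..p1}. Hw' p > 0) \<and> (\<forall>p\<in>{p1..0}. Ha' p > 0) \<and>
           1 / Ha' 0 = Gamma) \<and>
        H p1 = (p1 - p0) / lam \<and>
        H 0 = l + (p1 - p0) / lam)"
proof (intro allI impI, unfold Let_def)
  fix lam :: real
  assume lam: "lam > 0"
  define H where "H = (\<lambda>p. if p1 < p then p / Gamma + l + (p1 - p0) / lam else (p - p0) / lam)"
  define Q where "Q = 2 * g * rho_jump * (p1 - p0) / lam + Gamma^2 - lam^2"
  have water: "H p = (1 / lam) * p + (- p0 / lam)" if "p \<in> {p0..p1}" for p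
    using that by (auto simp: H_def diff_divide_distrib)
  have air: "H p = (1 / Gamma) * p + (l + (p1 - p0) / lam)" if "p \<in> {p1..0}" for p
    using that assms by (cases "p = p1") (auto simp: H_def field_simps)
  have C2: "C2_pieces p0 p1 H (\<lambda>_. 1 / lam) (\<lambda>_. 0) (\<lambda>_. 1 / Gamma) (\<lambda>_. 0)"
    using water air by (rule C2_pieces_affine)
  have cont: "continuous_on {p0..0} H"
    using assms(2,3) by (intro continuous_on_affine_pieces[OF _ _ water air]) auto
  have Hp1: "H p1 = (p1 - p0) / lam" and H0: "H 0 = l + (p1 - p0) / lam" and Hp0: "H p0 = 0"
    using assms by (auto simp: H_def)
  have jump: "1 / (1 / Gamma)^2 - 1 / (1 / lam)^2 + 2 * g * rho_jump * H p1 - Q = 0"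
    using Hp1 by (simp add: Q_def power_divide)
  have "laminar_solution g rho_jump p0 p1 l H Q"
    unfolding laminar_solution_def using cont C2 jump H0 Hp1 Hp0 by fastforce
  moreover have "\<exists>Hw' Hw'' Ha' Ha''. C2_pieces p0 p1 H Hw' Hw'' Ha' Ha'' \<and>
      (\<forall>p\<in>{p0..p1}. Hw' p > 0) \<and> (\<forall>p\<in>{p1..0}. Ha' p > 0) \<and> 1 / Ha' 0 = Gamma"
    (is ?circulation) using C2 lam assms(6) by fastforce
  ultimately show "laminar_solution g rho_jump p0 p1 l H Q \<and> ?circulation \<and>
      H p1 = (p1 - p0) / lam \<and> H 0 = l + (p1 - p0) / lam"
    using Hp1 H0 by blast
qed

end
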